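(* Let $M,N:\Sigma\to cb(X)$ be multimeasures. Then $M$ is uniformly scalarly absolutely continuous with respect to $N$ if and only if $M$ is uniformly scalarly dominated by $N$; and if $M$ is uniformly scalarly subordinated to $N$, then $M$ is uniformly scalarly dominated by (hence uniformly scalarly absolutely continuous with respect to) $N$.
   Context: $(\Omega,\Sigma)$ is a measurable space and $X$ is a Hausdorff locally convex space with dual $X'$. $cb(X)$ is the family of nonempty closed bounded convex subsets of $X$; $s(x',C)=\sup\{\langle x',x\rangle:x\in C\}$. A multimeasure $M:\Sigma\to cb(X)$ is a map such that every $s(x',M(\cdot))$, $x'\in X'$, is a (finite, real-valued) countably additive measure. $-N$ denotes $E\mapsto\{-x:x\in N(E)\}$, so $s(x',-N(E))=s(-x',N(E))$. For a finite signed measure $\nu$, $|\nu|$ is its variation. $\Sigma_E=\{F\in\Sigma:F\subseteq E\}$, $A^c=\Omega\setminus A$, and for $S\subseteq\mathbb R$, $\overline{\mathrm{aco}}\,S$ is the closed absolutely convex hull. Quantifiers "for all $x',y'$" range over $X'$ (equivalently, by positive homogeneity of support functions, over the unit ball $B_{X'}$ when $X$ is normed). (usac) $M$ is uniformly scalarly absolutely continuous w.r.t. $N$ if there exists $A\in\Sigma$ such that for every $\varepsilon>0$ there is $\delta>0$ such that for all $\alpha,\beta\in\mathbb R$, all $x',y'$ and all $E\in\Sigma$: if $|\alpha s(x',N)+\beta s(y',N)|(E\cap A)+|\alpha s(x',-N)+\beta s(y',-N)|(E\cap A^c)\le\delta$ then $|\alpha s(x',M)+\beta s(y',M)|(E)\le\varepsilon$.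 (usd) $M$ is uniformly scalarly dominated by $N$ if there exist $c\in\mathbb R$ and $A\in\Sigma$ such that for all $\alpha,\beta,x',y',E$: $|\alpha s(x',M)+\beta s(y',M)|(E)\le c|\alpha s(x',N)+\beta s(y',N)|(E\cap A)+c|\alpha s(x',-N)+\beta s(y',-N)|(E\cap A^c)$. (uss) $M$ is uniformly scalarly subordinated to $N$ if there exist $d\ge0$ and $A\in\Sigma$ such that for all $\alpha,\beta,x',y',E$: $\alpha s(x',M(E))+\beta s(y',M(E))\in d\,\overline{\mathrm{aco}}\{\alpha s(x',N(F\cap A))+\beta s(y',N(F\cap A)):F\in\Sigma_E\}+d\,\overline{\mathrm{aco}}\{\alpha s(x',-N(F\cap A^c))+\beta s(y',-N(F\cap A^c)):F\in\Sigma_E\}$. *)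

theory Defs
  imports "HOL-Analysis.Analysis"
begin

text \<open>Hausdorff locally convex real topological vector space structure on the type 'x
  (Hausdorff-ness comes from the class t2_space).\<close>
definition lcs :: "'x::{real_vector,t2_space} itself \<Rightarrow> bool" where
  "lcs _ \<longleftrightarrow>
     continuous_on UNIV (\<lambda>(x::'x, y). x + y) \<and>
     continuous_on UNIV (\<lambda>(c::real, x::'x). c *\<^sub>R x) \<and>
     (\<forall>U::'x set. open U \<and> 0 \<in> U \<longrightarrow> (\<exists>V. open V \<and> convex V \<and> 0 \<in> V \<and> V \<subseteq> U))"

definition dual :: "('x::{real_vector,topological_space} \<Rightarrow> real) set" where
  "dual = {f. linear f \<and> continuous_on UNIV f}"

definition tvs_bounded :: "'x::{real_vector,topological_space} set \<Rightarrow> bool" where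
  "tvs_bounded C \<longleftrightarrow> (\<forall>U. open U \<and> 0 \<in> U \<longrightarrow>
      (\<exists>t>0. \<forall>r\<ge>t. C \<subseteq> (\<lambda>x. r *\<^sub>R x) ` U))"

definition cb :: "'x::{real_vector,topological_space} set set" where
  "cb = {C. C \<noteq> {} \<and> closed C \<and> tvs_bounded C \<and> convex C}"

definition supp :: "('x \<Rightarrow> real) \<Rightarrow> 'x set \<Rightarrow> real" where
  "supp x' C = Sup (x' ` C)"

definition signed_measure :: "'a measure \<Rightarrow> ('a set \<Rightarrow> real) \<Rightarrow> bool" where
  "signed_measure \<Omega> \<nu> \<longleftrightarrow>
     (\<forall>A::nat \<Rightarrow> 'a set. range A \<subseteq> sets \<Omega> \<longrightarrow> disjoint_family A \<longrightarrow>
        (\<lambda>n. \<nu> (A n)) sums \<nu> (\<Union>n. A n))"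

definition variation :: "'a measure \<Rightarrow> ('a set \<Rightarrow> real) \<Rightarrow> 'a set \<Rightarrow> real" where
  "variation \<Omega> \<nu> E = Sup {(\<Sum>F\<in>P. \<bar>\<nu> F\<bar>) | P. finite P \<and> disjoint P \<and> P \<subseteq> sets \<Omega> \<and> \<Union>P = E}"

definition multimeasure :: "'a measure \<Rightarrow> ('a set \<Rightarrow> 'x::{real_vector,topological_space} set) \<Rightarrow> bool" where
  "multimeasure \<Omega> M \<longleftrightarrow> (\<forall>E\<in>sets \<Omega>. M E \<in> cb) \<and>
     (\<forall>x'\<in>dual. signed_measure \<Omega> (\<lambda>E. supp x' (M E)))"

definition mneg :: "('a set \<Rightarrow> 'x::real_vector set) \<Rightarrow> 'a set \<Rightarrow> 'x set" where
  "mneg N E = uminus ` N E"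

definition caco :: "real set \<Rightarrow> real set" where
  "caco S = closure (convex hull {c * x | c x. \<bar>c\<bar> \<le> 1 \<and> x \<in> S})"

definition lc :: "real \<Rightarrow> ('x \<Rightarrow> real) \<Rightarrow> real \<Rightarrow> ('x \<Rightarrow> real) \<Rightarrow> ('a set \<Rightarrow> 'x set) \<Rightarrow> 'a set \<Rightarrow> real" where
  "lc \<alpha> x' \<beta> y' M E = \<alpha> * supp x' (M E) + \<beta> * supp y' (M E)"

definition usac :: "'a measure \<Rightarrow> ('a set \<Rightarrow> 'x::{real_vector,topological_space} set) \<Rightarrow> ('a set \<Rightarrow> 'x set) \<Rightarrow> bool" where
  "usac \<Omega> M N \<longleftrightarrow> (\<exists>A\<in>sets \<Omega>. \<forall>\<epsilon>>0. \<exists>\<delta>>0. \<forall>\<alpha> \<beta> x' y' E.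
      x' \<in> dual \<longrightarrow> y' \<in> dual \<longrightarrow> E \<in> sets \<Omega> \<longrightarrow>
      variation \<Omega> (lc \<alpha> x' \<beta> y' N) (E \<inter> A) + variation \<Omega> (lc \<alpha> x' \<beta> y' (mneg N)) (E \<inter> (space \<Omega> - A)) \<le> \<delta>
      \<longrightarrow> variation \<Omega> (lc \<alpha> x' \<beta> y' M) E \<le> \<epsilon>)"

definition usd :: "'a measure \<Rightarrow> ('a set \<Rightarrow> 'x::{real_vector,topological_space} set) \<Rightarrow> ('a set \<Rightarrow> 'x set) \<Rightarrow> bool" where
  "usd \<Omega> M N \<longleftrightarrow> (\<exists>c::real. \<exists>A\<in>sets \<Omega>. \<forall>\<alpha> \<beta> x' y' E.
      x' \<in> dual \<longrightarrow> y' \<in> dual \<longrightarrow> E \<in> sets \<Omega> \<longrightarrow>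
      variation \<Omega> (lc \<alpha> x' \<beta> y' M) E
        \<le> c * variation \<Omega> (lc \<alpha> x' \<beta> y' N) (E \<inter> A) + c * variation \<Omega> (lc \<alpha> x' \<beta> y' (mneg N)) (E \<inter> (space \<Omega> - A)))"

definition uss :: "'a measure \<Rightarrow> ('a set \<Rightarrow> 'x::{real_vector,topological_space} set) \<Rightarrow> ('a set \<Rightarrow> 'x set) \<Rightarrow> bool" where
  "uss \<Omega> M N \<longleftrightarrow> (\<exists>d::real\<ge>0. \<exists>A\<in>sets \<Omega>. \<forall>\<alpha> \<beta> x' y' E.
      x' \<in> dual \<longrightarrow> y' \<in> dual \<longrightarrow> E \<in> sets \<Omega> \<longrightarrow>
      lc \<alpha> x' \<beta> y' M E \<in>
        {d * u + d * v | u v.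
           u \<in> caco {lc \<alpha> x' \<beta> y' N (F \<inter> A) | F. F \<in> sets \<Omega> \<and> F \<subseteq> E} \<and>
           v \<in> caco {lc \<alpha> x' \<beta> y' (mneg N) (F \<inter> (space \<Omega> - A)) | F. F \<in> sets \<Omega> \<and> F \<subseteq> E}})"

end

theory Submission
  imports Defs
begin

text \<open>All three conditions compare \<open>|\<alpha> s(x',M) + \<beta> s(y',M)|(E)\<close> with the quantity
  \<open>v = |\<alpha> s(x',N) + \<beta> s(y',N)|(E \<inter> A) + |\<alpha> s(x',-N) + \<beta> s(y',-N)|(E \<inter> A\<^sup>c)\<close>.
  Domination gives absolute continuity directly; conversely both sides are positively homogeneous
  in \<open>(\<alpha>, \<beta>)\<close>, so absolute continuity at \<open>\<epsilon> = 1\<close> gives domination by \<open>v / \<delta>\<close>.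
  Subordination bounds \<open>|\<alpha> s(x',M(G)) + \<beta> s(y',M(G))|\<close> by \<open>d v\<close> for all \<open>G \<subseteq> E\<close>, and the
  variation of a finite signed measure is at most twice the supremum of its absolute values on
  subsets, which is finite.\<close>

lemma signed_measure_empty:
  assumes "signed_measure \<Omega> \<mu>"
  shows "\<mu> {} = 0"
proof -
  have "(\<lambda>n. \<mu> {}) sums \<mu> {}"
    using assms unfolding signed_measure_def by (auto simp: disjoint_family_on_def)
  then have "(\<lambda>n. \<mu> {}) \<longlonglongrightarrow> 0"
    by (intro summable_LIMSEQ_zero sums_summable)
  then show ?thesis
    by (simp add: LIMSEQ_const_iff)
qed

lemma signed_measure_Un:
  assumes sm: "signed_measure \<Omega> \<mu>" and "A \<in> sets \<Omega>" "B \<in> sets \<Omega>" "A \<inter> B = {}"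
  shows "\<mu> (A \<union> B) = \<mu> A + \<mu> B"
proof -
  define f where "f n = (if n = 0 then A else if n = 1 then B else {})" for n :: nat
  have "range f \<subseteq> sets \<Omega>" "disjoint_family f" "(\<Union>n. f n) = A \<union> B"
    using assms by (auto simp: f_def disjoint_family_on_def split: if_splits)
  then have "(\<lambda>n. \<mu> (f n)) sums \<mu> (A \<union> B)"
    using sm unfolding signed_measure_def by metis
  moreover have "(\<lambda>n. \<mu> (f n)) sums (\<Sum>n\<in>{0,1}. \<mu> (f n))"
    by (rule sums_finite) (auto simp: f_def signed_measure_empty[OF sm])
  ultimately show ?thesis
    by (simp add: f_def sums_unique2)
qed

lemma signed_measure_finite_Union:
  assumes sm: "signed_measure \<Omega> \<mu>"
  shows "finite P \<Longrightarrow> disjoint P \<Longrightarrow> P \<subseteq> sets \<Omega> \<Longrightarrow> \<mu> (\<Union>P) = (\<Sum>F\<in>P. \<mu> F)"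
proof (induction P rule: finite_induct)
  case empty
  then show ?case by (simp add: signed_measure_empty[OF sm])
next
  case (insert F P)
  then have "F \<inter> \<Union>P = {}"
    by (auto simp: pairwise_insert disjnt_def)
  moreover have "\<Union>P \<in> sets \<Omega>"
    using insert by (intro sets.finite_Union) auto
  ultimately have "\<mu> (F \<union> \<Union>P) = \<mu> F + \<mu> (\<Union>P)"
    using insert.prems by (intro signed_measure_Un[OF sm]) auto
  with insert show ?case
    by (simp add: pairwise_insert)
qed

lemma signed_measure_lincomb:
  assumes "signed_measure \<Omega> f" "signed_measure \<Omega> g"
  shows "signed_measure \<Omega> (\<lambda>E. a * f E + b * g E)"
  using assms unfolding signed_measure_def by (simp add: sums_add sums_mult)

lemma sum_abs_signed_measure_le:
  assumes sm: "signed_measure \<Omega> \<mu>" and P: "finite P" "disjoint P" "P \<subseteq> sets \<Omega>"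
    and K: "\<And>G. G \<in> sets \<Omega> \<Longrightarrow> G \<subseteq> \<Union>P \<Longrightarrow> \<bar>\<mu> G\<bar> \<le> K"
  shows "(\<Sum>F\<in>P. \<bar>\<mu> F\<bar>) \<le> 2 * K"
proof -
  define Pos where "Pos = {F\<in>P. \<mu> F \<ge> 0}"
  define Neg where "Neg = {F\<in>P. \<mu> F < 0}"
  have fin: "finite Pos" "finite Neg" and disj: "disjoint Pos" "disjoint Neg"
    and meas: "Pos \<subseteq> sets \<Omega>" "Neg \<subseteq> sets \<Omega>"
    using P unfolding Pos_def Neg_def by (auto intro: pairwise_subset)
  have "\<Union>Pos \<in> sets \<Omega>" "\<Union>Neg \<in> sets \<Omega>" "\<Union>Pos \<subseteq> \<Union>P" "\<Union>Neg \<subseteq> \<Union>P"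
    using fin meas by (auto simp: Pos_def Neg_def)
  then have bounds: "\<bar>\<mu> (\<Union>Pos)\<bar> \<le> K" "\<bar>\<mu> (\<Union>Neg)\<bar> \<le> K"
    using K by auto
  have "(\<Sum>F\<in>P. \<bar>\<mu> F\<bar>) = (\<Sum>F\<in>Pos. \<bar>\<mu> F\<bar>) + (\<Sum>F\<in>Neg. \<bar>\<mu> F\<bar>)"
    using P(1) unfolding Pos_def Neg_def by (subst sum.union_disjoint[symmetric]) (auto intro: sum.cong)
  also have "\<dots> = (\<Sum>F\<in>Pos. \<mu> F) - (\<Sum>F\<in>Neg. \<mu> F)"
    by (simp add: Pos_def Neg_def sum_negf[symmetric])
  also have "\<dots> = \<mu> (\<Union>Pos) - \<mu> (\<Union>Neg)"
    using signed_measure_finite_Union[OF sm] fin disj meas by simp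
  also have "\<dots> \<le> 2 * K"
    using bounds by linarith
  finally show ?thesis .
qed

definition unbounded_on :: "'a measure \<Rightarrow> ('a set \<Rightarrow> real) \<Rightarrow> 'a set \<Rightarrow> bool" where
  "unbounded_on \<Omega> \<mu> G \<longleftrightarrow> (\<forall>B. \<exists>H\<in>sets \<Omega>. H \<subseteq> G \<and> B < \<bar>\<mu> H\<bar>)"

lemma unbounded_on_split:
  assumes sm: "signed_measure \<Omega> \<mu>" and G: "G \<in> sets \<Omega>" and unb: "unbounded_on \<Omega> \<mu> G"
  shows "\<exists>H\<in>sets \<Omega>. H \<subseteq> G \<and> 1 \<le> \<bar>\<mu> (G - H)\<bar> \<and> unbounded_on \<Omega> \<mu> H"
proof -
  have split: "\<mu> K = \<mu> (K \<inter> H) + \<mu> (K - H)" if "K \<in> sets \<Omega>" "H \<in> sets \<Omega>" for K H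
    using signed_measure_Un[OF sm, of "K \<inter> H" "K - H"] that by (simp add: Int_Diff_Un Int_Diff_disjoint)
  obtain H where H: "H \<in> sets \<Omega>" "H \<subseteq> G" "\<bar>\<mu> G\<bar> + 1 < \<bar>\<mu> H\<bar>"
    using unb unfolding unbounded_on_def by blast
  have GH: "G - H \<in> sets \<Omega>"
    using G H by auto
  have "\<mu> G = \<mu> H + \<mu> (G - H)"
    using split[OF G H(1)] H(2) by (simp add: Int_absorb1)
  then have big: "1 \<le> \<bar>\<mu> (G - H)\<bar>" "1 \<le> \<bar>\<mu> H\<bar>"
    using H(3) by linarith+
  have "unbounded_on \<Omega> \<mu> H \<or> unbounded_on \<Omega> \<mu> (G - H)"
  proof (rule ccontr)
    assume "\<not> ?thesis"
    then have "\<not> unbounded_on \<Omega> \<mu> H" "\<not> unbounded_on \<Omega> \<mu> (G - H)"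
      by simp_all
    then obtain B1 B2 where nB1: "\<not> (\<exists>K\<in>sets \<Omega>. K \<subseteq> H \<and> B1 < \<bar>\<mu> K\<bar>)"
      and nB2: "\<not> (\<exists>K\<in>sets \<Omega>. K \<subseteq> G - H \<and> B2 < \<bar>\<mu> K\<bar>)"
      unfolding unbounded_on_def by blast
    have B1: "\<bar>\<mu> K\<bar> \<le> B1" if "K \<in> sets \<Omega>" "K \<subseteq> H" for K
      using nB1 that by (meson not_less)
    have B2: "\<bar>\<mu> K\<bar> \<le> B2" if "K \<in> sets \<Omega>" "K \<subseteq> G - H" for K
      using nB2 that by (meson not_less)
    obtain K where K: "K \<in> sets \<Omega>" "K \<subseteq> G" "B1 + B2 < \<bar>\<mu> K\<bar>"
      using unb unfolding unbounded_on_def by blast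
    have "\<bar>\<mu> (K \<inter> H)\<bar> \<le> B1" "\<bar>\<mu> (K - H)\<bar> \<le> B2"
      using K H by (auto intro: B1 B2)
    then show False
      using split[OF K(1) H(1)] K(3) by linarith
  qed
  then show ?thesis
  proof
    assume "unbounded_on \<Omega> \<mu> H"
    then show ?thesis
      using H(1,2) big(1) by blast
  next
    assume "unbounded_on \<Omega> \<mu> (G - H)"
    moreover have "G - (G - H) = H"
      using H(2) by blast
    ultimately show ?thesis
      using GH big(2) by (intro bexI[of _ "G - H"]) auto
  qed
qed

text \<open>An unbounded set would split off infinitely many disjoint pieces of measure at least 1,
  contradicting the convergence of the series of their measures.\<close>
lemma signed_measure_bounded:
  assumes sm: "signed_measure \<Omega> \<mu>"
  shows "\<exists>B. \<forall>G\<in>sets \<Omega>. \<bar>\<mu> G\<bar> \<le> B"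
proof (rule ccontr)
  assume "\<not> ?thesis"
  then have "unbounded_on \<Omega> \<mu> (space \<Omega>)"
    unfolding unbounded_on_def by (meson not_le sets.sets_into_space)
  then have start: "\<exists>G. G \<in> sets \<Omega> \<and> unbounded_on \<Omega> \<mu> G"
    by blast
  have next_set: "\<exists>H. (H \<in> sets \<Omega> \<and> unbounded_on \<Omega> \<mu> H) \<and> H \<subseteq> G \<and> 1 \<le> \<bar>\<mu> (G - H)\<bar>"
    if "G \<in> sets \<Omega> \<and> unbounded_on \<Omega> \<mu> G" for G
    using unbounded_on_split[OF sm] that by blast
  obtain g where g: "\<And>n. g n \<in> sets \<Omega> \<and> unbounded_on \<Omega> \<mu> (g n) \<and>
      g (Suc n) \<subseteq> g n \<and> 1 \<le> \<bar>\<mu> (g n - g (Suc n))\<bar>"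
    using dependent_nat_choice[where P = "\<lambda>_ G. G \<in> sets \<Omega> \<and> unbounded_on \<Omega> \<mu> G"
        and Q = "\<lambda>_ G H. H \<subseteq> G \<and> 1 \<le> \<bar>\<mu> (G - H)\<bar>", OF start next_set]
    by blast
  define D where "D n = g n - g (Suc n)" for n
  have "decseq g"
    using g by (intro decseq_SucI) auto
  have "D m \<inter> D n = {}" if "n < m" for m n
  proof -
    have "D m \<subseteq> g (Suc n)"
      using \<open>decseq g\<close> that unfolding D_def decseq_def by (meson Diff_subset Suc_leI subset_trans)
    then show ?thesis
      unfolding D_def by blast
  qed
  then have "disjoint_family D"
    unfolding disjoint_family_on_def by (metis inf_commute linorder_neqE_nat)
  moreover have "range D \<subseteq> sets \<Omega>"
    using g unfolding D_def by auto
  ultimately have "(\<lambda>n. \<mu> (D n)) sums \<mu> (\<Union>n. D n)"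
    using sm unfolding signed_measure_def by blast
  then have "(\<lambda>n. \<mu> (D n)) \<longlonglongrightarrow> 0"
    by (intro summable_LIMSEQ_zero sums_summable)
  from LIMSEQ_D[OF this, of 1] obtain n where "\<bar>\<mu> (D n)\<bar> < 1"
    by auto
  then show False
    using g[of n] unfolding D_def by simp
qed

lemma variation_bdd_above:
  assumes sm: "signed_measure \<Omega> \<mu>"
  shows "bdd_above {(\<Sum>F\<in>P. \<bar>\<mu> F\<bar>) | P. finite P \<and> disjoint P \<and> P \<subseteq> sets \<Omega> \<and> \<Union>P = E}"
proof -
  obtain B where "\<forall>G\<in>sets \<Omega>. \<bar>\<mu> G\<bar> \<le> B"
    using signed_measure_bounded[OF sm] ..
  then show ?thesis
    by (intro bdd_aboveI[of _ "2 * B"]) (auto intro!: sum_abs_signed_measure_le[OF sm])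
qed

lemma sum_abs_le_variation:
  assumes sm: "signed_measure \<Omega> \<mu>" and "finite P" "disjoint P" "P \<subseteq> sets \<Omega>"
  shows "(\<Sum>F\<in>P. \<bar>\<mu> F\<bar>) \<le> variation \<Omega> \<mu> (\<Union>P)"
  unfolding variation_def by (rule cSup_upper[OF _ variation_bdd_above[OF sm]]) (use assms in blast)

lemma variation_le:
  assumes "E \<in> sets \<Omega>"
    and "\<And>P. finite P \<Longrightarrow> disjoint P \<Longrightarrow> P \<subseteq> sets \<Omega> \<Longrightarrow> \<Union>P = E \<Longrightarrow> (\<Sum>F\<in>P. \<bar>\<mu> F\<bar>) \<le> C"
  shows "variation \<Omega> \<mu> E \<le> C"
  unfolding variation_def
proof (rule cSup_least)
  have "finite {E}" "disjoint {E}" "{E} \<subseteq> sets \<Omega>" "\<Union>{E} = E"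
    using assms(1) by (simp_all add: pairwise_def)
  then show "{(\<Sum>F\<in>P. \<bar>\<mu> F\<bar>) | P. finite P \<and> disjoint P \<and> P \<subseteq> sets \<Omega> \<and> \<Union>P = E} \<noteq> {}"
    by blast
qed (use assms(2) in blast)

lemma abs_le_variation:
  assumes sm: "signed_measure \<Omega> \<mu>" and "E \<in> sets \<Omega>" "F \<in> sets \<Omega>" "F \<subseteq> E"
  shows "\<bar>\<mu> F\<bar> \<le> variation \<Omega> \<mu> E"
proof -
  have "\<bar>\<mu> F\<bar> \<le> (\<Sum>G\<in>{F, E - F}. \<bar>\<mu> G\<bar>)"
    by (rule member_le_sum) auto
  also have "\<dots> \<le> variation \<Omega> \<mu> (\<Union>{F, E - F})"
    using assms by (intro sum_abs_le_variation[OF sm]) (auto simp: pairwise_def disjnt_def)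
  also have "\<Union>{F, E - F} = E"
    using assms(4) by blast
  finally show ?thesis .
qed

lemma variation_nonneg:
  assumes "signed_measure \<Omega> \<mu>" "E \<in> sets \<Omega>"
  shows "0 \<le> variation \<Omega> \<mu> E"
  using abs_le_variation[OF assms assms(2) order_refl] by linarith

lemma variation_le_twice_bound:
  assumes sm: "signed_measure \<Omega> \<mu>" and E: "E \<in> sets \<Omega>"
    and K: "\<And>G. G \<in> sets \<Omega> \<Longrightarrow> G \<subseteq> E \<Longrightarrow> \<bar>\<mu> G\<bar> \<le> K"
  shows "variation \<Omega> \<mu> E \<le> 2 * K"
  using K by (intro variation_le[OF E] sum_abs_signed_measure_le[OF sm]) auto

lemma variation_mult:
  assumes sm: "signed_measure \<Omega> \<mu>" and E: "E \<in> sets \<Omega>" and c: "c > 0"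
  shows "variation \<Omega> (\<lambda>F. c * \<mu> F) E = c * variation \<Omega> \<mu> E"
proof -
  have sm': "signed_measure \<Omega> (\<lambda>F. c * \<mu> F)"
    using signed_measure_lincomb[OF sm sm, of c 0] by simp
  have sum_mult: "(\<Sum>F\<in>P. \<bar>c * \<mu> F\<bar>) = c * (\<Sum>F\<in>P. \<bar>\<mu> F\<bar>)" for P
    using c by (simp add: abs_mult sum_distrib_left)
  have "variation \<Omega> (\<lambda>F. c * \<mu> F) E \<le> c * variation \<Omega> \<mu> E"
    using sum_abs_le_variation[OF sm] c
    by (intro variation_le[OF E]) (auto simp: sum_mult)
  moreover have "variation \<Omega> \<mu> E \<le> variation \<Omega> (\<lambda>F. c * \<mu> F) E / c"
    using sum_abs_le_variation[OF sm'] c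
    by (intro variation_le[OF E]) (auto simp: sum_mult field_simps)
  ultimately show ?thesis
    using c by (simp add: field_simps)
qed

lemma uminus_dual: "x' \<in> dual \<Longrightarrow> (\<lambda>v. - x' v) \<in> dual"
  unfolding dual_def by (auto intro: linear_compose_neg continuous_on_minus)

lemma supp_mneg:
  assumes "x' \<in> dual"
  shows "supp x' (mneg N E) = supp (\<lambda>v. - x' v) (N E)"
proof -
  have "x' ` uminus ` N E = (\<lambda>v. - x' v) ` N E"
    using assms linear_neg unfolding dual_def image_image by fastforce
  then show ?thesis
    unfolding supp_def mneg_def by simp
qed

lemma signed_measure_lc:
  assumes "multimeasure \<Omega> M" "x' \<in> dual" "y' \<in> dual"
  shows "signed_measure \<Omega> (lc \<alpha> x' \<beta> y' M)"
  using assms signed_measure_lincomb[of \<Omega> "\<lambda>E. supp x' (M E)" "\<lambda>E. supp y' (M E)" \<alpha> \<beta>]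
  unfolding multimeasure_def lc_def[abs_def] by blast

lemma signed_measure_lc_mneg:
  assumes "multimeasure \<Omega> N" "x' \<in> dual" "y' \<in> dual"
  shows "signed_measure \<Omega> (lc \<alpha> x' \<beta> y' (mneg N))"
proof -
  have "lc \<alpha> x' \<beta> y' (mneg N) = lc \<alpha> (\<lambda>v. - x' v) \<beta> (\<lambda>v. - y' v) N"
    using assms(2,3) unfolding lc_def[abs_def] by (simp add: supp_mneg)
  then show ?thesis
    using assms by (simp add: signed_measure_lc uminus_dual)
qed

lemma lc_mult: "lc (c * \<alpha>) x' (c * \<beta>) y' M = (\<lambda>E. c * lc \<alpha> x' \<beta> y' M E)"
  unfolding lc_def[abs_def] by (simp add: algebra_simps)

lemma abs_le_if_in_caco:
  assumes "\<forall>x\<in>S. \<bar>x\<bar> \<le> K" "u \<in> caco S"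
  shows "\<bar>u\<bar> \<le> K"
proof -
  have "\<bar>c * x\<bar> \<le> K" if "\<bar>c\<bar> \<le> 1" "x \<in> S" for c x
  proof -
    have "\<bar>c\<bar> * \<bar>x\<bar> \<le> 1 * K"
      using assms(1) that by (intro mult_mono) auto
    then show ?thesis
      by (simp add: abs_mult)
  qed
  then have "{c * x | c x. \<bar>c\<bar> \<le> 1 \<and> x \<in> S} \<subseteq> cball 0 K"
    by auto
  then have "caco S \<subseteq> cball 0 K"
    unfolding caco_def by (intro closure_minimal hull_minimal) (auto simp: convex_cball)
  then show ?thesis
    using assms(2) by auto
qed

definition variation_split ::
    "'a measure \<Rightarrow> real \<Rightarrow> ('x \<Rightarrow> real) \<Rightarrow> real \<Rightarrow> ('x \<Rightarrow> real) \<Rightarrow> ('a set \<Rightarrow> 'x::real_vector set)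
      \<Rightarrow> 'a set \<Rightarrow> 'a set \<Rightarrow> real" where
  "variation_split \<Omega> \<alpha> x' \<beta> y' N A E =
     variation \<Omega> (lc \<alpha> x' \<beta> y' N) (E \<inter> A) + variation \<Omega> (lc \<alpha> x' \<beta> y' (mneg N)) (E \<inter> (space \<Omega> - A))"

lemma usac_iff_variation_split:
  "usac \<Omega> M N \<longleftrightarrow> (\<exists>A\<in>sets \<Omega>. \<forall>\<epsilon>>0. \<exists>\<delta>>0. \<forall>\<alpha> \<beta> x' y' E.
      x' \<in> dual \<longrightarrow> y' \<in> dual \<longrightarrow> E \<in> sets \<Omega> \<longrightarrow>
      variation_split \<Omega> \<alpha> x' \<beta> y' N A E \<le> \<delta> \<longrightarrow> variation \<Omega> (lc \<alpha> x' \<beta> y' M) E \<le> \<epsilon>)"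
  unfolding usac_def variation_split_def ..

lemma usd_iff_variation_split:
  "usd \<Omega> M N \<longleftrightarrow> (\<exists>c. \<exists>A\<in>sets \<Omega>. \<forall>\<alpha> \<beta> x' y' E.
      x' \<in> dual \<longrightarrow> y' \<in> dual \<longrightarrow> E \<in> sets \<Omega> \<longrightarrow>
      variation \<Omega> (lc \<alpha> x' \<beta> y' M) E \<le> c * variation_split \<Omega> \<alpha> x' \<beta> y' N A E)"
  unfolding usd_def variation_split_def distrib_left ..

lemma variation_split_nonneg:
  assumes "multimeasure \<Omega> N" "x' \<in> dual" "y' \<in> dual" "A \<in> sets \<Omega>" "E \<in> sets \<Omega>"
  shows "0 \<le> variation_split \<Omega> \<alpha> x' \<beta> y' N A E"
  unfolding variation_split_def using assms
  by (intro add_nonneg_nonneg variation_nonneg signed_measure_lc signed_measure_lc_mneg) auto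

lemma variation_split_mult:
  assumes "multimeasure \<Omega> N" "x' \<in> dual" "y' \<in> dual" "A \<in> sets \<Omega>" "E \<in> sets \<Omega>" "l > 0"
  shows "variation_split \<Omega> (l * \<alpha>) x' (l * \<beta>) y' N A E = l * variation_split \<Omega> \<alpha> x' \<beta> y' N A E"
  unfolding variation_split_def lc_mult using assms
  by (simp add: variation_mult signed_measure_lc signed_measure_lc_mneg distrib_left Diff_Int_distrib)

lemma usd_imp_usac:
  assumes "multimeasure \<Omega> N" and "usd \<Omega> M N"
  shows "usac \<Omega> M N"
proof -
  obtain c A where A: "A \<in> sets \<Omega>" and dom: "\<And>\<alpha> \<beta> x' y' E. x' \<in> dual \<Longrightarrow> y' \<in> dual \<Longrightarrow> E \<in> sets \<Omega> \<Longrightarrow>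
      variation \<Omega> (lc \<alpha> x' \<beta> y' M) E \<le> c * variation_split \<Omega> \<alpha> x' \<beta> y' N A E"
    using assms(2) unfolding usd_iff_variation_split by blast
  have "variation \<Omega> (lc \<alpha> x' \<beta> y' M) E \<le> \<epsilon>"
    if "\<epsilon> > 0" "x' \<in> dual" "y' \<in> dual" "E \<in> sets \<Omega>"
      and small: "variation_split \<Omega> \<alpha> x' \<beta> y' N A E \<le> \<epsilon> / (\<bar>c\<bar> + 1)"
    for \<epsilon> \<alpha> \<beta> x' y' E
  proof -
    have "variation \<Omega> (lc \<alpha> x' \<beta> y' M) E \<le> \<bar>c\<bar> * variation_split \<Omega> \<alpha> x' \<beta> y' N A E"
      using dom[OF that(2-4)]
        mult_right_mono[OF abs_ge_self variation_split_nonneg[OF assms(1) that(2,3) A that(4)]]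
      by (rule order_trans)
    also have "\<dots> \<le> \<bar>c\<bar> * (\<epsilon> / (\<bar>c\<bar> + 1))"
      using small by (intro mult_left_mono) auto
    also have "\<dots> \<le> \<epsilon>"
      using \<open>\<epsilon> > 0\<close> by (simp add: field_simps)
    finally show ?thesis .
  qed
  then show ?thesis
    unfolding usac_iff_variation_split using A
    by (intro bexI[OF _ A] allI impI exI[of _ "\<epsilon> / (\<bar>c\<bar> + 1)" for \<epsilon>])
      (auto intro: divide_pos_pos)
qed

lemma le_divide_if_scaled_bound:
  fixes m s \<delta> :: real
  assumes "\<delta> > 0" "0 \<le> s" and bound: "\<And>l. l > 0 \<Longrightarrow> l * s \<le> \<delta> \<Longrightarrow> l * m \<le> 1"
  shows "m \<le> s / \<delta>"
proof (cases "s > 0")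
  case True
  then have "(\<delta> / s) * m \<le> 1"
    using assms by (intro bound) auto
  then show ?thesis
    using True assms(1) by (simp add: field_simps)
next
  case False
  then have "s = 0"
    using assms(2) by simp
  show ?thesis
  proof (rule ccontr)
    assume "\<not> m \<le> s / \<delta>"
    then have "m > 0"
      using \<open>s = 0\<close> by simp
    then have "(2 / m) * m \<le> 1"
      using \<open>s = 0\<close> assms(1) by (intro bound) auto
    then show False
      using \<open>m > 0\<close> by simp
  qed
qed

lemma usac_imp_usd:
  assumes "multimeasure \<Omega> M" "multimeasure \<Omega> N" and "usac \<Omega> M N"
  shows "usd \<Omega> M N"
proof -
  obtain A where A: "A \<in> sets \<Omega>" and ac: "\<forall>\<epsilon>>0. \<exists>\<delta>>0. \<forall>\<alpha> \<beta> x' y' E.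
      x' \<in> dual \<longrightarrow> y' \<in> dual \<longrightarrow> E \<in> sets \<Omega> \<longrightarrow>
      variation_split \<Omega> \<alpha> x' \<beta> y' N A E \<le> \<delta> \<longrightarrow> variation \<Omega> (lc \<alpha> x' \<beta> y' M) E \<le> \<epsilon>"
    using assms(3) unfolding usac_iff_variation_split by blast
  then obtain \<delta> where "\<delta> > 0" and ac1: "\<And>\<alpha> \<beta> x' y' E. x' \<in> dual \<Longrightarrow> y' \<in> dual \<Longrightarrow> E \<in> sets \<Omega> \<Longrightarrow>
      variation_split \<Omega> \<alpha> x' \<beta> y' N A E \<le> \<delta> \<Longrightarrow> variation \<Omega> (lc \<alpha> x' \<beta> y' M) E \<le> 1"
    by (meson zero_less_one)
  have "variation \<Omega> (lc \<alpha> x' \<beta> y' M) E \<le> 1 / \<delta> * variation_split \<Omega> \<alpha> x' \<beta> y' N A E"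
    if x'y': "x' \<in> dual" "y' \<in> dual" and E: "E \<in> sets \<Omega>" for \<alpha> \<beta> x' y' E
  proof -
    have "l * variation \<Omega> (lc \<alpha> x' \<beta> y' M) E \<le> 1"
      if "l > 0" "l * variation_split \<Omega> \<alpha> x' \<beta> y' N A E \<le> \<delta>" for l
    proof -
      have "variation \<Omega> (lc (l * \<alpha>) x' (l * \<beta>) y' M) E \<le> 1"
        using that variation_split_mult[OF assms(2) x'y' A E]
        by (intro ac1[OF x'y' E]) auto
      then show ?thesis
        unfolding lc_mult using variation_mult[OF signed_measure_lc[OF assms(1) x'y'] E \<open>l > 0\<close>]
        by simp
    qed
    then show ?thesis
      using le_divide_if_scaled_bound \<open>\<delta> > 0\<close> variation_split_nonneg[OF assms(2) x'y' A E] by simp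
  qed
  then show ?thesis
    unfolding usd_iff_variation_split using A by blast
qed

lemma uss_imp_usd:
  assumes "multimeasure \<Omega> M" "multimeasure \<Omega> N" and "uss \<Omega> M N"
  shows "usd \<Omega> M N"
proof -
  obtain d A where "d \<ge> 0" and A: "A \<in> sets \<Omega>" and sub: "\<And>\<alpha> \<beta> x' y' E.
      x' \<in> dual \<Longrightarrow> y' \<in> dual \<Longrightarrow> E \<in> sets \<Omega> \<Longrightarrow>
      lc \<alpha> x' \<beta> y' M E \<in>
        {d * u + d * v | u v.
           u \<in> caco {lc \<alpha> x' \<beta> y' N (F \<inter> A) | F. F \<in> sets \<Omega> \<and> F \<subseteq> E} \<and>
           v \<in> caco {lc \<alpha> x' \<beta> y' (mneg N) (F \<inter> (space \<Omega> - A)) | F. F \<in> sets \<Omega> \<and> F \<subseteq> E}}"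
    using assms(3) unfolding uss_def by blast
  have "variation \<Omega> (lc \<alpha> x' \<beta> y' M) E \<le> 2 * d * variation_split \<Omega> \<alpha> x' \<beta> y' N A E"
    if x'y': "x' \<in> dual" "y' \<in> dual" and E: "E \<in> sets \<Omega>" for \<alpha> \<beta> x' y' E
  proof -
    let ?K1 = "variation \<Omega> (lc \<alpha> x' \<beta> y' N) (E \<inter> A)"
    let ?K2 = "variation \<Omega> (lc \<alpha> x' \<beta> y' (mneg N)) (E \<inter> (space \<Omega> - A))"
    have "\<bar>lc \<alpha> x' \<beta> y' M G\<bar> \<le> d * (?K1 + ?K2)" if G: "G \<in> sets \<Omega>" "G \<subseteq> E" for G
    proof -
      obtain u v where uv: "lc \<alpha> x' \<beta> y' M G = d * u + d * v"
        and u: "u \<in> caco {lc \<alpha> x' \<beta> y' N (F \<inter> A) | F. F \<in> sets \<Omega> \<and> F \<subseteq> G}"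
        and v: "v \<in> caco {lc \<alpha> x' \<beta> y' (mneg N) (F \<inter> (space \<Omega> - A)) | F. F \<in> sets \<Omega> \<and> F \<subseteq> G}"
        using sub[OF x'y' G(1)] by blast
      have "\<bar>u\<bar> \<le> ?K1"
        using G A E by (intro abs_le_if_in_caco[OF _ u])
          (auto intro!: abs_le_variation signed_measure_lc[OF assms(2) x'y'])
      moreover have "\<bar>v\<bar> \<le> ?K2"
        using G A E by (intro abs_le_if_in_caco[OF _ v])
          (auto intro!: abs_le_variation signed_measure_lc_mneg[OF assms(2) x'y'])
      ultimately show ?thesis
        unfolding uv using \<open>d \<ge> 0\<close> abs_triangle_ineq[of "d * u" "d * v"]
          mult_left_mono[of "\<bar>u\<bar>" ?K1 d] mult_left_mono[of "\<bar>v\<bar>" ?K2 d]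
        by (simp add: abs_mult distrib_left)
    qed
    then have "variation \<Omega> (lc \<alpha> x' \<beta> y' M) E \<le> 2 * (d * (?K1 + ?K2))"
      by (rule variation_le_twice_bound[OF signed_measure_lc[OF assms(1) x'y'] E])
    then show ?thesis
      unfolding variation_split_def by (simp add: mult.assoc)
  qed
  then show ?thesis
    unfolding usd_iff_variation_split using A by blast
qed

theorem proposition4p3:
  fixes \<Omega> :: "'a measure"
    and M N :: "'a set \<Rightarrow> 'x::{real_vector,t2_space} set"
  assumes "lcs TYPE('x)"
    and "multimeasure \<Omega> M" and "multimeasure \<Omega> N"
  shows "(usac \<Omega> M N \<longleftrightarrow> usd \<Omega> M N) \<and> (uss \<Omega> M N \<longrightarrow> usd \<Omega> M N)"
  using usac_imp_usd[OF assms(2,3)] usd_imp_usac[OF assms(3)] uss_imp_usd[OF assms(2,3)] by blast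

end
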